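(* Let $(X,d)$ be a metric space with $|X|\ge 2$ and let $\tilde x$ be a $d$-statistically convergent sequence of points of $X$. Let $\tilde x'$ be a subsequence of $\tilde x$ with the following property: whenever $\tilde y$ is a sequence in $X$ statistically equivalent to $\tilde x$ and $\tilde y'$ is a subsequence of $\tilde y$ with $K_{\tilde y'}=K_{\tilde x'}$, the subsequence $\tilde y'$ is $d$-statistically convergent. Then $\limsup_{n\to\infty}\frac{|K_{\tilde x'}(n)|}{n}>0$.
   Context: For a subsequence $\tilde z'=(z_{n(k)})$ of a sequence $(z_n)$ (with $(n(k))$ infinite and strictly increasing), $K_{\tilde z'}=\{n(k):k\in\mathbb N\}$ and $K_{\tilde z'}(n)=\{m\in K_{\tilde z'}:m\le n\}$. A sequence $(z_k)$ is $d$-statistically convergent if there is $a\in X$ with $\lim_{n\to\infty}\frac1n|\{k\le n: d(z_k,a)\ge\epsilon\}|=0$ for all $\epsilon>0$; subsequences are regarded as sequences indexed by $k$. A set $M\subseteq\mathbb N$ is statistical dense if $\lim_{n\to\infty}|\{m\in M:m\le n\}|/n=1$; sequences $(x_n),(y_n)$ are statistically equivalent if $x_n=y_n$ for all $n$ in some statistical dense $M$. *)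

theory Defs
  imports Complex_Main "HOL-Library.Extended_Real"
begin

(* Sequences are indexed by nat = {0,1,2,...}; "|{k <= n : ...}| / n" is rendered
   as "card {k. k < n \<and> ...} / n" (an index shift by one, irrelevant for limits). *)

definition d_stat_convergent :: "(nat \<Rightarrow> 'a::metric_space) \<Rightarrow> bool" where
  "d_stat_convergent z \<longleftrightarrow>
     (\<exists>a. \<forall>\<epsilon>>0. (\<lambda>n. real (card {k. k < n \<and> dist (z k) a \<ge> \<epsilon>}) / real n) \<longlonglongrightarrow> 0)"

definition stat_dense :: "nat set \<Rightarrow> bool" where
  "stat_dense M \<longleftrightarrow> (\<lambda>n. real (card {m\<in>M. m < n}) / real n) \<longlonglongrightarrow> 1"

definition stat_equivalent :: "(nat \<Rightarrow> 'a) \<Rightarrow> (nat \<Rightarrow> 'a) \<Rightarrow> bool" where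
  "stat_equivalent x y \<longleftrightarrow> (\<exists>M. stat_dense M \<and> (\<forall>n\<in>M. x n = y n))"

(* K_{x'} for the subsequence x \<circ> r is range r; K_{x'}(n) = {m \<in> range r. m \<le> n} *)
definition Kcount :: "(nat \<Rightarrow> nat) \<Rightarrow> nat \<Rightarrow> nat" where
  "Kcount r n = card {m \<in> range r. m \<le> n}"

end

theory Submission
  imports Defs
begin

text \<open>If the index set of the subsequence had upper density zero, one could redefine the
  sequence on it (keeping a statistically equivalent sequence) so that the subsequence alternates
  between two distinct points; an alternating sequence is not statistically convergent, because
  each of its two values is taken on a set of density 1/2.\<close>

definition zero_density :: "nat set \<Rightarrow> bool" where
  "zero_density A \<longleftrightarrow> (\<lambda>n. real (card {m\<in>A. m < n}) / real n) \<longlonglongrightarrow> 0"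

lemma d_stat_convergent_iff_zero_density:
  "d_stat_convergent z \<longleftrightarrow> (\<exists>a. \<forall>\<epsilon>>0. zero_density {k. dist (z k) a \<ge> \<epsilon>})"
  unfolding d_stat_convergent_def zero_density_def by (simp add: conj_commute)

lemma card_residue_mod_2_ge:
  fixes j :: nat
  assumes "j < 2"
  shows "n div 2 \<le> card {k\<in>{k. k mod 2 = j}. k < n}"
proof -
  have inj: "inj_on (\<lambda>i. 2*i + j) {..<n div 2}" by (auto simp: inj_on_def)
  have "(\<lambda>i. 2*i + j) ` {..<n div 2} \<subseteq> {k\<in>{k. k mod 2 = j}. k < n}"
    using assms by auto
  then have "card ((\<lambda>i. 2*i + j) ` {..<n div 2}) \<le> card {k\<in>{k. k mod 2 = j}. k < n}"
    by (intro card_mono) auto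
  with inj show ?thesis by (simp add: card_image)
qed

lemma zero_density_subset:
  assumes "zero_density B" and "A \<subseteq> B"
  shows "zero_density A"
  unfolding zero_density_def
proof (rule tendsto_sandwich[OF _ _ tendsto_const assms(1)[unfolded zero_density_def]])
  have "card {m\<in>A. m < n} \<le> card {m\<in>B. m < n}" for n
    using assms(2) by (intro card_mono) auto
  then show "\<forall>\<^sub>F n in sequentially. real (card {m\<in>A. m < n}) / real n \<le> real (card {m\<in>B. m < n}) / real n"
    by (intro always_eventually allI divide_right_mono) auto
qed simp

lemma not_zero_density_residue_mod_2:
  fixes j :: nat
  assumes "j < 2"
  shows "\<not> zero_density {k. k mod 2 = j}"
proof
  assume "zero_density {k. k mod 2 = j}"
  then have lim: "(\<lambda>n. real (card {k\<in>{k. k mod 2 = j}. k < n}) / real n) \<longlonglongrightarrow> 0"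
    unfolding zero_density_def .
  have "1/3 \<le> real (card {k\<in>{k. k mod 2 = j}. k < n}) / real n" if "n \<ge> 2" for n
  proof -
    have "n \<le> 3 * (n div 2)" using that by presburger
    then have "real n \<le> 3 * real (n div 2)" by linarith
    also have "\<dots> \<le> 3 * real (card {k\<in>{k. k mod 2 = j}. k < n})"
      using card_residue_mod_2_ge[OF assms, of n] by simp
    finally show ?thesis using that by (simp add: field_simps)
  qed
  then have "1/3 \<le> (0::real)"
    by (intro tendsto_lowerbound[OF lim] eventually_sequentiallyI[of 2]) auto
  then show False by simp
qed

lemma alternating_not_d_stat_convergent:
  fixes a b :: "'a::metric_space"
  assumes "a \<noteq> b"
  shows "\<not> d_stat_convergent (\<lambda>k. if even k then a else b)"
proof
  assume "d_stat_convergent (\<lambda>k. if even k then a else b)"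
  then obtain c where c: "\<And>\<epsilon>. \<epsilon> > 0 \<Longrightarrow> zero_density {k. dist (if even k then a else b) c \<ge> \<epsilon>}"
    unfolding d_stat_convergent_iff_zero_density by blast
  define \<epsilon> where "\<epsilon> = dist a b / 2"
  have bad: "zero_density {k. dist (if even k then a else b) c \<ge> \<epsilon>}"
    using assms by (intro c) (simp add: \<epsilon>_def)
  have "dist a c \<ge> \<epsilon> \<or> dist b c \<ge> \<epsilon>"
    using dist_triangle3[of a b c] by (auto simp: \<epsilon>_def dist_commute)
  then obtain j :: nat where "j < 2"
    and "{k. k mod 2 = j} \<subseteq> {k. dist (if even k then a else b) c \<ge> \<epsilon>}"
  proof (elim disjE)
    assume "dist a c \<ge> \<epsilon>"
    then show ?thesis by (intro that[of 0]) (auto simp: even_iff_mod_2_eq_zero)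
  next
    assume "dist b c \<ge> \<epsilon>"
    then show ?thesis by (intro that[of 1]) (auto simp: odd_iff_mod_2_eq_one)
  qed
  then show False
    using not_zero_density_residue_mod_2 zero_density_subset bad by blast
qed

lemma stat_dense_Compl:
  assumes "zero_density A"
  shows "stat_dense (- A)"
  unfolding stat_dense_def
proof (rule Lim_transform_eventually)
  show "(\<lambda>n. 1 - real (card {m\<in>A. m < n}) / real n) \<longlonglongrightarrow> 1"
    using tendsto_diff[OF tendsto_const assms[unfolded zero_density_def], of 1] by simp
  have "card {m\<in>-A. m < n} = n - card {m\<in>A. m < n}" for n
  proof -
    have "{m\<in>-A. m < n} = {..<n} - {m\<in>A. m < n}" by auto
    then show ?thesis by (simp add: card_Diff_subset subset_eq)
  qed
  moreover have "card {m\<in>A. m < n} \<le> n" for n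
    using card_mono[of "{..<n}" "{m\<in>A. m < n}"] by auto
  ultimately show "\<forall>\<^sub>F n in sequentially.
      1 - real (card {m\<in>A. m < n}) / real n = real (card {m\<in>-A. m < n}) / real n"
    by (intro eventually_sequentiallyI[of 1]) (simp add: of_nat_diff field_simps)
qed

lemma stat_equivalent_if_zero_density:
  assumes "zero_density A" and "\<And>n. n \<notin> A \<Longrightarrow> x n = y n"
  shows "stat_equivalent x y"
  unfolding stat_equivalent_def using stat_dense_Compl[OF assms(1)] assms(2) by blast

lemma tendsto_zero_if_limsup_nonpos:
  fixes f :: "nat \<Rightarrow> real"
  assumes "limsup (\<lambda>n. ereal (f n)) \<le> 0" and "\<And>n. f n \<ge> 0"
  shows "f \<longlonglongrightarrow> 0"
proof -
  have "0 \<le> liminf (\<lambda>n. ereal (f n))"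
    using assms(2) by (intro Liminf_bounded) auto
  moreover have "liminf (\<lambda>n. ereal (f n)) \<le> limsup (\<lambda>n. ereal (f n))"
    by (rule Liminf_le_Limsup) simp
  ultimately have "((\<lambda>n. ereal (f n)) \<longlongrightarrow> 0) sequentially"
    using assms(1) by (subst tendsto_iff_Liminf_eq_Limsup) auto
  then show ?thesis unfolding zero_ereal_def lim_ereal .
qed

lemma zero_density_range_if_Kcount:
  assumes "(\<lambda>n. real (Kcount r n) / real n) \<longlonglongrightarrow> 0"
  shows "zero_density (range r)"
  unfolding zero_density_def
proof (rule tendsto_sandwich[OF _ _ tendsto_const assms])
  have "card {m\<in>range r. m < n} \<le> Kcount r n" for n
    unfolding Kcount_def by (rule card_mono) auto
  then show "\<forall>\<^sub>F n in sequentially. real (card {m\<in>range r. m < n}) / real n \<le> real (Kcount r n) / real n"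
    by (intro always_eventually allI divide_right_mono) auto
qed simp

theorem theorem7:
  fixes x :: "nat \<Rightarrow> 'a::metric_space" and r :: "nat \<Rightarrow> nat"
  assumes two: "\<exists>a b::'a. a \<noteq> b"
    and conv: "d_stat_convergent x"
    and sub: "strict_mono r"
    and hyp: "\<And>y r'. stat_equivalent x y \<Longrightarrow> strict_mono r' \<Longrightarrow> range r' = range r
                 \<Longrightarrow> d_stat_convergent (y \<circ> r')"
  shows "limsup (\<lambda>n. ereal (real (Kcount r n) / real n)) > 0"
proof (rule ccontr)
  assume "\<not> ?thesis"
  then have "zero_density (range r)"
    by (intro zero_density_range_if_Kcount tendsto_zero_if_limsup_nonpos) auto
  obtain a b :: 'a where ab: "a \<noteq> b" using two by blast
  define y where "y n = (if n \<in> range r then (if even (inv r n) then a else b) else x n)" for n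
  have "stat_equivalent x y"
    using \<open>zero_density (range r)\<close> by (rule stat_equivalent_if_zero_density) (simp add: y_def)
  then have "d_stat_convergent (y \<circ> r)" by (rule hyp[OF _ sub refl])
  moreover have "y \<circ> r = (\<lambda>k. if even k then a else b)"
    using strict_mono_imp_inj_on[OF sub] by (simp add: fun_eq_iff y_def inv_f_f)
  ultimately show False using alternating_not_d_stat_convergent[OF ab] by simp
qed

end
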